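(* Let $S_o\subseteq\mathbb U_d\times\mathcal P_\Pi$ and $S_f\subseteq\mathbb U_d\times\mathcal R_\Pi$. The program $\min\ c_1x+\eta$ subject to $x\in\mathcal X$; for every $(u_d,\pi)\in S_o$: $\eta\ge c_2y^{(u_d,\pi)}-\dot u(\tilde u^{(u_d,\pi)})$, $y^{(u_d,\pi)}\ge 0$, $B_2y^{(u_d,\pi)}+E_cu_c^{(u_d,\pi)}+\dot u(\tilde u^{(u_d,\pi)})\ge d-B_1x-E_du_d$, $(u_c^{(u_d,\pi)},\tilde u^{(u_d,\pi)},\lambda^{(u_d,\pi)})\in\mathcal{OU}(x,u_d,\pi)$; for every $(u_d,\gamma)\in S_f$: $B_2y^{(u_d,\gamma)}+E_cv_c^{(u_d,\gamma)}+\dot u(\tilde v^{(u_d,\gamma)})\ge d-B_1x-E_du_d$, $y^{(u_d,\gamma)}\ge 0$, $(v_c^{(u_d,\gamma)},\tilde v^{(u_d,\gamma)},\zeta^{(u_d,\gamma)})\in\mathcal{OU}(x,u_d,\gamma)$, is a relaxation of the two-stage robust optimization problem, and its optimal value is at most $w^*$.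
   Context: $\mathcal X=\{x\in\mathbb R^{n_x}_+\times\mathbb Z^{m_x}_+: Ax\ge b\}$. $\mathcal U(x)=\{u=(u_c,u_d)\in\mathbb R^{n_u}_+\times\mathbb U_d: F_c(x)u_c+F_d(x)u_d\le h+Gx\}$ with $\mathbb U_d\subseteq\mathbb Z^{m_u}_+$ finite. Two-stage robust problem: $w^*=\min_{x\in\mathcal X}\big[c_1x+\max_{u\in\mathcal U(x)}\min\{c_2y: B_2y\ge d-B_1x-E_cu_c-E_du_d,\ y\ge0\}\big]$ (minimum over an empty set $=+\infty$). $\Pi=\{\pi\ge0: B_2^\intercal\pi\le c_2^\intercal\}$, $\mathcal P_\Pi$ its extreme points, $\mathcal R_\Pi$ its extreme rays. Standing assumptions: $\mathcal U(x)\ne\emptyset$ and bounded for $x\in\mathcal X$; $\min\{c_1x+c_2y: x\in\mathcal X,u\in\mathcal U(x),B_2y\ge d-B_1x-E_cu_c-E_du_d,y\ge0\}>-\infty$. $M$ is a sufficiently large constant, $\mathbf 1$ the all-ones vector, $\circ$ the componentwise product. $\mathcal{OU}(x,u_d,\beta)$ is the set of $(u_c,\tilde u,\lambda)$ with $F_c(x)u_c-\tilde u\le h+Gx-F_d(x)u_d$, $F_c(x)^\intercal\lambda\ge-E_c^\intercal\beta$, $\lambda\le M\mathbf 1$, $\lambda\circ(h+Gx-F_d(x)u_d-F_c(x)u_c+\tilde u)=0$, $u_c\circ(F_c(x)^\intercal\lambda+E_c^\intercal\beta)=0$, $\tilde u\circ(M\mathbf 1-\lambda)=0$, $u_c,\tilde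 u,\lambda\ge0$. The indicator $\dot u(\tilde u)$ is $0$ if $\tilde u=0$ and $+\infty$ otherwise; $+\infty$ added to a vector is added to every component, and constraints with an infinite slack are automatically satisfied. *)

theory Defs
  imports "HOL-Analysis.Analysis"
begin

definition udot :: "real^'n \<Rightarrow> ereal" where
  "udot v = (if v = 0 then 0 else \<infinity>)"

definition Xset :: "real^'x^'a \<Rightarrow> real^'a \<Rightarrow> 'x set \<Rightarrow> (real^'x) set" where
  "Xset A b Iint = {x. 0 \<le> x \<and> (\<forall>i\<in>Iint. x$i \<in> \<int>) \<and> b \<le> A *v x}"

definition Uset :: "(real^'x \<Rightarrow> real^'uc^'r) \<Rightarrow> (real^'x \<Rightarrow> real^'ud^'r) \<Rightarrow> real^'r
    \<Rightarrow> real^'x^'r \<Rightarrow> (real^'ud) set \<Rightarrow> real^'x \<Rightarrow> ((real^'uc) \<times> (real^'ud)) set" where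
  "Uset Fc Fd h G Ud x = {(uc, ud). 0 \<le> uc \<and> ud \<in> Ud \<and> Fc x *v uc + Fd x *v ud \<le> h + G *v x}"

definition second_stage :: "real^'y^'m \<Rightarrow> real^'y \<Rightarrow> real^'m \<Rightarrow> real^'x^'m \<Rightarrow> real^'uc^'m
    \<Rightarrow> real^'ud^'m \<Rightarrow> real^'x \<Rightarrow> real^'uc \<Rightarrow> real^'ud \<Rightarrow> ereal" where
  "second_stage B2 c2 d B1 Ec Ed x uc ud =
     (INF y \<in> {y. 0 \<le> y \<and> d - B1 *v x - Ec *v uc - Ed *v ud \<le> B2 *v y}. ereal (c2 \<bullet> y))"

definition recourse :: "(real^'x \<Rightarrow> real^'uc^'r) \<Rightarrow> (real^'x \<Rightarrow> real^'ud^'r) \<Rightarrow> real^'r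
    \<Rightarrow> real^'x^'r \<Rightarrow> (real^'ud) set \<Rightarrow> real^'y^'m \<Rightarrow> real^'y \<Rightarrow> real^'m \<Rightarrow> real^'x^'m
    \<Rightarrow> real^'uc^'m \<Rightarrow> real^'ud^'m \<Rightarrow> real^'x \<Rightarrow> ereal" where
  "recourse Fc Fd h G Ud B2 c2 d B1 Ec Ed x =
     (SUP u \<in> Uset Fc Fd h G Ud x. second_stage B2 c2 d B1 Ec Ed x (fst u) (snd u))"

definition w_star :: "real^'x^'a \<Rightarrow> real^'a \<Rightarrow> 'x set \<Rightarrow> real^'x
    \<Rightarrow> (real^'x \<Rightarrow> real^'uc^'r) \<Rightarrow> (real^'x \<Rightarrow> real^'ud^'r) \<Rightarrow> real^'r
    \<Rightarrow> real^'x^'r \<Rightarrow> (real^'ud) set \<Rightarrow> real^'y^'m \<Rightarrow> real^'y \<Rightarrow> real^'m \<Rightarrow> real^'x^'m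
    \<Rightarrow> real^'uc^'m \<Rightarrow> real^'ud^'m \<Rightarrow> ereal" where
  "w_star A b Iint c1 Fc Fd h G Ud B2 c2 d B1 Ec Ed =
     (INF x \<in> Xset A b Iint. ereal (c1 \<bullet> x) + recourse Fc Fd h G Ud B2 c2 d B1 Ec Ed x)"

definition PiSet :: "real^'y^'m \<Rightarrow> real^'y \<Rightarrow> (real^'m) set" where
  "PiSet B2 c2 = {p. 0 \<le> p \<and> transpose B2 *v p \<le> c2}"

definition rec_cone :: "('a::real_vector) set \<Rightarrow> 'a set" where
  "rec_cone S = {g. \<forall>p\<in>S. \<forall>t::real. 0 \<le> t \<longrightarrow> p + t *\<^sub>R g \<in> S}"

definition extreme_rays :: "('a::real_vector) set \<Rightarrow> 'a set" where
  "extreme_rays S = {g. g \<noteq> 0 \<and> g \<in> rec_cone S \<and>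
      {t *\<^sub>R g | t::real. 0 \<le> t} face_of rec_cone S}"

definition OU :: "(real^'x \<Rightarrow> real^'uc^'r) \<Rightarrow> (real^'x \<Rightarrow> real^'ud^'r) \<Rightarrow> real^'r
    \<Rightarrow> real^'x^'r \<Rightarrow> real^'uc^'m \<Rightarrow> real \<Rightarrow> real^'x \<Rightarrow> real^'ud \<Rightarrow> real^'m
    \<Rightarrow> ((real^'uc) \<times> (real^'r) \<times> (real^'r)) set" where
  "OU Fc Fd h G Ec M x ud \<beta> = {(uc, ut, lam).
      Fc x *v uc - ut \<le> h + G *v x - Fd x *v ud \<and>
      - (transpose Ec *v \<beta>) \<le> transpose (Fc x) *v lam \<and>
      lam \<le> (\<chi> i. M) \<and>
      (\<forall>i. lam $ i * (h + G *v x - Fd x *v ud - Fc x *v uc + ut) $ i = 0) \<and>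
      (\<forall>j. uc $ j * (transpose (Fc x) *v lam + transpose Ec *v \<beta>) $ j = 0) \<and>
      (\<forall>i. ut $ i * (M - lam $ i) = 0) \<and>
      0 \<le> uc \<and> 0 \<le> ut \<and> 0 \<le> lam}"

text \<open>Feasibility in the relaxed program for the scenario sets So, Sf. The scenario
variables are functions of the index (u_d, pi) resp. (u_d, gamma).\<close>
definition relax_feas where
  "relax_feas A b Iint Fc Fd h G B2 c2 d B1 Ec Ed M So Sf x \<eta> yo uco uto lo yf vc vt z \<longleftrightarrow>
     x \<in> Xset A b Iint \<and>
     (\<forall>ud p. (ud, p) \<in> So \<longrightarrow>
        ereal (c2 \<bullet> yo (ud, p)) - udot (uto (ud, p)) \<le> ereal \<eta> \<and>
        0 \<le> yo (ud, p) \<and>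
        (\<forall>i. ereal ((d - B1 *v x - Ed *v ud) $ i)
              \<le> ereal ((B2 *v yo (ud, p) + Ec *v uco (ud, p)) $ i) + udot (uto (ud, p))) \<and>
        (uco (ud, p), uto (ud, p), lo (ud, p)) \<in> OU Fc Fd h G Ec M x ud p) \<and>
     (\<forall>ud g. (ud, g) \<in> Sf \<longrightarrow>
        (\<forall>i. ereal ((d - B1 *v x - Ed *v ud) $ i)
              \<le> ereal ((B2 *v yf (ud, g) + Ec *v vc (ud, g)) $ i) + udot (vt (ud, g))) \<and>
        0 \<le> yf (ud, g) \<and>
        (vc (ud, g), vt (ud, g), z (ud, g)) \<in> OU Fc Fd h G Ec M x ud g)"

definition relax_value where
  "relax_value A b Iint c1 Fc Fd h G B2 c2 d B1 Ec Ed M So Sf =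
     Inf {ereal (c1 \<bullet> x + \<eta>) | x \<eta> yo uco uto lo yf vc vt z.
            relax_feas A b Iint Fc Fd h G B2 c2 d B1 Ec Ed M So Sf x \<eta> yo uco uto lo yf vc vt z}"

end

theory Submission
  imports Defs
begin

(* Fix a first-stage decision x whose worst-case recourse is a finite value R; the relaxation is
   then feasible with eta = R. For a scenario (u_d, beta), OU(x, u_d, beta) is the set of
   complementary optimal pairs of a box-constrained linear program over (u_c, u~) and its dual
   over lambda; M is large enough to make the dual feasible, the primal is always feasible, so LP
   strong duality (from Farkas' lemma) yields such a pair. If u~ is nonzero, the indicator makes
   all constraints of the scenario vacuous. If u~ = 0, then (u_c, u_d) is an admissible
   uncertainty, so the second-stage program at it has value at most R, and this value is
   attained because linear images of the nonnegative orthant are closed. Minimising over x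
   bounds the optimal value of the relaxation by w*. *)

lemma inner_left_mono:
  fixes x y z :: "'a::ordered_euclidean_space"
  assumes "0 \<le> z" "x \<le> y"
  shows "z \<bullet> x \<le> z \<bullet> y"
  using inner_nonneg_nonneg[of z "y - x"] assms by (simp add: inner_diff_right)

lemma nonneg_if_inner_nonneg:
  fixes v :: "'a::ordered_euclidean_space"
  assumes "\<And>x. 0 \<le> x \<Longrightarrow> 0 \<le> v \<bullet> x"
  shows "0 \<le> v"
  using assms[OF Basis_nonneg] by (simp add: eucl_le[where 'a='a] inner_commute)

lemma convex_cone_sum:
  assumes "convex_cone S" "\<And>i. i \<in> I \<Longrightarrow> f i \<in> S"
  shows "sum f I \<in> S"
  using assms(2)
proof (induction I rule: infinite_finite_induct)
  case (insert i I)
  then show ?case by (simp add: convex_cone_add[OF assms(1)])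
qed (use convex_cone_contains_0[OF assms(1)] in simp_all)

lemma convex_cone_nonneg_orthant: "convex_cone {x::'a::ordered_euclidean_space. 0 \<le> x}"
  by (auto simp: convex_cone_iff scaleR_nonneg_nonneg)

lemma nonneg_orthant_eq_convex_cone_hull_Basis:
  "{x::'a::ordered_euclidean_space. 0 \<le> x} = convex_cone hull Basis"
proof
  show "{x::'a. 0 \<le> x} \<subseteq> convex_cone hull Basis"
  proof
    fix x :: 'a assume "x \<in> {x. 0 \<le> x}"
    then have "\<forall>b\<in>Basis. 0 \<le> x \<bullet> b" by (simp add: eucl_le[where 'a='a])
    then have "(\<Sum>b\<in>Basis. (x \<bullet> b) *\<^sub>R b) \<in> convex_cone hull Basis"
      by (intro convex_cone_sum convex_cone_convex_cone_hull convex_cone_hull_mul hull_inc) auto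
    then show "x \<in> convex_cone hull Basis" by (simp add: euclidean_representation)
  qed
  show "convex_cone hull Basis \<subseteq> {x::'a. 0 \<le> x}"
    using convex_cone_nonneg_orthant by (rule hull_minimal[rotated]) auto
qed

lemma closed_linear_image_nonneg_orthant:
  fixes L :: "'a::ordered_euclidean_space \<Rightarrow> 'b::euclidean_space"
  assumes "linear L"
  shows "closed (L ` {x. 0 \<le> x})"
  using assms
  by (simp add: nonneg_orthant_eq_convex_cone_hull_Basis convex_cone_hull_linear_image[symmetric]
      closed_convex_cone_hull)

lemma farkas_lemma:
  fixes L :: "'a::ordered_euclidean_space \<Rightarrow> 'b::euclidean_space"
  assumes "linear L"
  shows "(\<exists>x\<ge>0. L x = b) \<or> (\<exists>y. y \<bullet> b < 0 \<and> (\<forall>x\<ge>0. 0 \<le> y \<bullet> L x))"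
proof (cases "b \<in> L ` {x. 0 \<le> x}")
  case False
  let ?K = "L ` {x. 0 \<le> x}"
  have cone: "convex_cone ?K"
    by (intro convex_cone_linear_image conjI convex_cone_nonneg_orthant assms)
  obtain y c where yb: "y \<bullet> b < c" and yK: "\<forall>z\<in>?K. c < y \<bullet> z"
    using separating_hyperplane_closed_point[OF _ closed_linear_image_nonneg_orthant[OF assms] False]
      cone by (auto simp: convex_cone_def)
  have "c < 0" using yK convex_cone_contains_0[OF cone] by force
  have "0 \<le> y \<bullet> L x" if "0 \<le> x" for x
  proof (rule ccontr)
    assume neg: "\<not> 0 \<le> y \<bullet> L x"
    define t where "t = c / (y \<bullet> L x)"
    have "0 \<le> t" using neg \<open>c < 0\<close> by (simp add: t_def divide_nonpos_neg)
    then have "c < y \<bullet> L (t *\<^sub>R x)" using yK that by (simp add: scaleR_nonneg_nonneg)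
    also have "\<dots> = c" using neg by (simp add: t_def linear_scale[OF assms])
    finally show False by simp
  qed
  then show ?thesis using yb \<open>c < 0\<close> by force
qed auto

lemma lp_feasible_le_if_INF_le:
  fixes B :: "'a::ordered_euclidean_space \<Rightarrow> 'b::ordered_euclidean_space"
  assumes lin: "linear B" and INF_le: "(INF y\<in>{y. 0 \<le> y \<and> r \<le> B y}. ereal (c \<bullet> y)) \<le> ereal R"
  shows "\<exists>y\<ge>0. r \<le> B y \<and> c \<bullet> y \<le> R"
proof -
  define L :: "'a \<times> 'b \<times> real \<Rightarrow> 'b \<times> real" where
    "L = (\<lambda>(y, s, t). (B y - s, c \<bullet> y + t))"
  have "linear L"
    unfolding linear_iff L_def
    by (auto simp: linear_add[OF lin] linear_scale[OF lin] algebra_simps inner_add_right)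
  then have closed: "closed (L ` {x. 0 \<le> x})"
    by (rule closed_linear_image_nonneg_orthant)
  have "(r, R + e) \<in> L ` {x. 0 \<le> x}" if "0 < e" for e
  proof -
    have "(INF y\<in>{y. 0 \<le> y \<and> r \<le> B y}. ereal (c \<bullet> y)) < ereal (R + e)"
      using INF_le that by (simp add: le_less_trans)
    then obtain y where y: "0 \<le> y" "r \<le> B y" "c \<bullet> y < R + e"
      by (auto simp: INF_less_iff)
    then have "L (y, B y - r, R + e - c \<bullet> y) = (r, R + e)" "0 \<le> (y, B y - r, R + e - c \<bullet> y)"
      by (auto simp: L_def less_eq_prod_def)
    then show ?thesis by (metis image_eqI mem_Collect_eq)
  qed
  moreover have "dist (r, R + e / 2) (r, R) < e" if "0 < e" for e
    using that by (simp add: dist_Pair_Pair dist_real_def)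
  ultimately have "\<forall>e>0. \<exists>z\<in>L ` {x. 0 \<le> x}. dist z (r, R) < e"
    by (meson half_gt_zero)
  then have "(r, R) \<in> L ` {x. 0 \<le> x}"
    using closed_approachable[OF closed] by blast
  then obtain y s t where "0 \<le> (y, s, t)" "L (y, s, t) = (r, R)" by auto
  then show ?thesis
    by (intro exI[of _ y]) (auto simp: L_def less_eq_prod_def)
qed

lemma lp_strong_duality:
  fixes B :: "'a::ordered_euclidean_space \<Rightarrow> 'b::ordered_euclidean_space"
  assumes lin: "linear B"
    and primal: "0 \<le> y0" "r \<le> B y0" and dual: "0 \<le> p0" "adjoint B p0 \<le> c"
  shows "\<exists>y p. 0 \<le> y \<and> r \<le> B y \<and> 0 \<le> p \<and> adjoint B p \<le> c \<and> c \<bullet> y \<le> r \<bullet> p"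
proof -
  define L :: "'a \<times> 'b \<times> 'b \<times> 'a \<times> real \<Rightarrow> 'b \<times> 'a \<times> real" where
    "L = (\<lambda>(y, p, s1, s2, s3). (B y - s1, adjoint B p + s2, c \<bullet> y - r \<bullet> p + s3))"
  have adj: "linear (adjoint B)" by (rule adjoint_linear[OF lin])
  have "linear L"
    by (simp add: linear_iff L_def split_paired_all linear_add[OF lin] linear_scale[OF lin]
        linear_add[OF adj] linear_scale[OF adj] inner_add_right scaleR_right_diff_distrib
        scaleR_add_right distrib_left right_diff_distrib)
  from farkas_lemma[OF this, of "(r, c, 0)"] show ?thesis
  proof (elim disjE exE conjE)
    fix x assume "0 \<le> x" "L x = (r, c, 0)"
    moreover obtain y p s1 s2 s3 where "x = (y, p, s1, s2, s3)" by (cases x) auto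
    ultimately have "0 \<le> y" "0 \<le> p" "0 \<le> s1" "0 \<le> s2" "0 \<le> s3"
      and "B y - s1 = r" "adjoint B p + s2 = c" "c \<bullet> y - r \<bullet> p + s3 = 0"
      by (simp_all add: L_def less_eq_prod_def)
    then have "r \<le> B y" "adjoint B p \<le> c" "c \<bullet> y \<le> r \<bullet> p"
      by auto
    then show ?thesis using \<open>0 \<le> y\<close> \<open>0 \<le> p\<close> by blast
  next
    fix w assume w_neg: "w \<bullet> (r, c, 0) < 0" and cert: "\<forall>x\<ge>0. 0 \<le> w \<bullet> L x"
    obtain a q t where w: "w = (a, q, t)" by (cases w)
    have neg: "a \<bullet> r + q \<bullet> c < 0" using w_neg w by simp
    have cert_y: "0 \<le> a \<bullet> B y + t * (c \<bullet> y)" if "0 \<le> y" for y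
      using cert[rule_format, of "(y, 0, 0, 0, 0)"] that
      by (simp add: w L_def zero_prod_def linear_0[OF adj])
    have cert_p: "0 \<le> q \<bullet> adjoint B p - t * (r \<bullet> p)" if "0 \<le> p" for p
      using cert[rule_format, of "(0, p, 0, 0, 0)"] that
      by (simp add: w L_def zero_prod_def linear_0[OF lin])
    have "0 \<le> - a"
    proof (rule nonneg_if_inner_nonneg)
      fix s :: 'b assume "0 \<le> s"
      then show "0 \<le> - a \<bullet> s"
        using cert[rule_format, of "(0, 0, s, 0, 0)"]
        by (simp add: w L_def zero_prod_def linear_0[OF lin] linear_0[OF adj])
    qed
    have "0 \<le> q"
    proof (rule nonneg_if_inner_nonneg)
      fix s :: 'a assume "0 \<le> s"
      then show "0 \<le> q \<bullet> s"
        using cert[rule_format, of "(0, 0, 0, s, 0)"]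
        by (simp add: w L_def zero_prod_def linear_0[OF lin] linear_0[OF adj])
    qed
    have "0 \<le> t"
      using cert[rule_format, of "(0, 0, 0, 0, 1)"]
      by (simp add: w L_def zero_prod_def linear_0[OF lin] linear_0[OF adj])
    show ?thesis
    proof (cases "t = 0")
      case True
      have "0 \<le> q \<bullet> adjoint B p0" using cert_p[OF dual(1)] True by simp
      also have "\<dots> \<le> q \<bullet> c" using inner_left_mono[OF \<open>0 \<le> q\<close> dual(2)] .
      finally have "0 \<le> q \<bullet> c" .
      have "0 \<le> a \<bullet> B y0" using cert_y[OF primal(1)] True by simp
      also have "\<dots> \<le> a \<bullet> r" using inner_left_mono[OF \<open>0 \<le> - a\<close> primal(2)] by simp
      finally show ?thesis using \<open>0 \<le> q \<bullet> c\<close> neg by linarith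
    next
      case False
      \<comment> \<open>Test the certificate against the candidate pair y = q, p = - a.\<close>
      have "0 \<le> a \<bullet> B q + t * (c \<bullet> q)" using cert_y[OF \<open>0 \<le> q\<close>] .
      moreover have "0 \<le> - (B q \<bullet> a) + t * (r \<bullet> a)"
        using cert_p[OF \<open>0 \<le> - a\<close>] by (simp add: linear_neg[OF adj] adjoint_works[OF lin])
      ultimately have "0 \<le> t * (a \<bullet> r + q \<bullet> c)"
        by (simp add: algebra_simps inner_commute)
      then show ?thesis using neg False \<open>0 \<le> t\<close> by (simp add: zero_le_mult_iff)
    qed
  qed
qed

lemma complementary_slackness:
  fixes B :: "'a::ordered_euclidean_space \<Rightarrow> 'b::ordered_euclidean_space"
  assumes lin: "linear B"
    and "0 \<le> y" "r \<le> B y" "0 \<le> p" "adjoint B p \<le> c" and gap: "c \<bullet> y \<le> r \<bullet> p"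
  shows "y \<bullet> (c - adjoint B p) = 0" and "p \<bullet> (B y - r) = 0"
proof -
  have "y \<bullet> (c - adjoint B p) + p \<bullet> (B y - r) = c \<bullet> y - r \<bullet> p"
    by (simp add: inner_diff_right adjoint_works[OF lin] inner_commute)
  moreover have "0 \<le> y \<bullet> (c - adjoint B p)" "0 \<le> p \<bullet> (B y - r)"
    using assms by (auto intro!: inner_nonneg_nonneg)
  ultimately show "y \<bullet> (c - adjoint B p) = 0" and "p \<bullet> (B y - r) = 0"
    using gap by linarith+
qed

lemma mult_nth_eq_0_if_inner_eq_0:
  fixes x y :: "real^'n"
  assumes "0 \<le> x" "0 \<le> y" "x \<bullet> y = 0"
  shows "x $ i * y $ i = 0"
  using assms unfolding inner_vec_def less_eq_vec_def
  by (subst (asm) sum_nonneg_eq_0_iff) auto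

lemma inner_matrix_vector_mult_transpose:
  fixes F :: "real^'c^'r"
  shows "(F *v u) \<bullet> p = u \<bullet> (transpose F *v p)"
  by (metis adjoint_matrix adjoint_works matrix_vector_mul_linear)

lemma adjoint_slack_map:
  fixes F :: "real^'c^'r"
  shows "adjoint (\<lambda>(u, t). t - F *v u) = (\<lambda>p. (- (transpose F *v p), p))"
  by (rule adjoint_unique)
    (auto simp: inner_diff_left inner_matrix_vector_mult_transpose)

lemma OU_nonempty:
  fixes Fc :: "real^'x \<Rightarrow> real^'uc^'r"
  assumes "0 \<le> lam0" "lam0 \<le> (\<chi> i. M)" "- (transpose Ec *v \<beta>) \<le> transpose (Fc x) *v lam0"
  shows "\<exists>uc ut lam. (uc, ut, lam) \<in> OU Fc Fd h G Ec M x ud \<beta>"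
proof -
  define F where "F = Fc x"
  define s where "s = h + G *v x - Fd x *v ud"
  define g where "g = transpose Ec *v \<beta>"
  define B :: "(real^'uc) \<times> (real^'r) \<Rightarrow> real^'r" where "B = (\<lambda>(u, t). t - F *v u)"
  have lin: "linear B"
    by (simp add: B_def linear_iff split_paired_all matrix_vector_right_distrib
        matrix_vector_mult_scaleR scaleR_right_diff_distrib)
  have adj: "adjoint B = (\<lambda>p. (- (transpose F *v p), p))"
    unfolding B_def by (rule adjoint_slack_map)
  \<comment> \<open>OU consists of the complementary optimal pairs of the program
    min g \<bullet> u + M (\<Sum>i. t $ i) over u, t \<ge> 0 with t - F u \<ge> - s, and of its dual in lambda.\<close>
  have "0 \<le> ((0::real^'uc), \<bar>s\<bar>)" "- s \<le> B (0, \<bar>s\<bar>)"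
    by (simp_all add: B_def zero_prod_def abs_ge_minus_self)
  moreover have "adjoint B lam0 \<le> (g, \<chi> i. M)"
    using assms by (simp add: adj g_def F_def minus_le_iff)
  ultimately obtain v lam where v: "0 \<le> v" "- s \<le> B v" and lam: "0 \<le> lam" "adjoint B lam \<le> (g, \<chi> i. M)"
    and gap: "(g, \<chi> i. M) \<bullet> v \<le> - s \<bullet> lam"
    using lp_strong_duality[OF lin _ _ \<open>0 \<le> lam0\<close>] by blast
  obtain uc ut where v_def: "v = (uc, ut)" by (cases v)
  have cs1: "v \<bullet> ((g, \<chi> i. M) - adjoint B lam) = 0" and cs2: "lam \<bullet> (B v + s) = 0"
    using complementary_slackness[OF lin v lam gap] by simp_all
  have uc: "0 \<le> uc" and ut: "0 \<le> ut" and primal: "F *v uc - ut \<le> s"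
    using v by (auto simp: v_def B_def zero_prod_def algebra_simps)
  have dual: "- g \<le> transpose F *v lam" "lam \<le> (\<chi> i. M)"
    using lam(2) unfolding adj by (auto simp: minus_le_iff)
  have nonneg: "0 \<le> g + transpose F *v lam" "0 \<le> (\<chi> i. M) - lam" "0 \<le> s - F *v uc + ut"
    using primal dual by (simp_all add: less_eq_vec_def) (smt (verit))+
  have "uc \<bullet> (g + transpose F *v lam) + ut \<bullet> ((\<chi> i. M) - lam) = 0"
    using cs1 by (simp add: v_def adj algebra_simps)
  then have cs_uc: "uc \<bullet> (g + transpose F *v lam) = 0" and cs_ut: "ut \<bullet> ((\<chi> i. M) - lam) = 0"
    using inner_nonneg_nonneg[OF uc nonneg(1)] inner_nonneg_nonneg[OF ut nonneg(2)] by linarith+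
  have cs_lam: "lam \<bullet> (s - F *v uc + ut) = 0"
    using cs2 by (simp add: v_def B_def algebra_simps)
  have "uc $ j * (transpose F *v lam + g) $ j = 0" for j
    using mult_nth_eq_0_if_inner_eq_0[OF uc nonneg(1) cs_uc, of j] by (simp add: add.commute)
  moreover have "ut $ i * (M - lam $ i) = 0" for i
    using mult_nth_eq_0_if_inner_eq_0[OF ut nonneg(2) cs_ut, of i] by simp
  moreover have "lam $ i * (s - F *v uc + ut) $ i = 0" for i
    using mult_nth_eq_0_if_inner_eq_0[OF lam(1) nonneg(3) cs_lam] .
  ultimately show ?thesis
    using uc ut lam(1) primal dual unfolding OU_def F_def s_def g_def by blast
qed

lemma Uset_if_OU_no_slack:
  assumes "(uc, 0, lam) \<in> OU Fc Fd h G Ec M x ud \<beta>" "ud \<in> Ud"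
  shows "(uc, ud) \<in> Uset Fc Fd h G Ud x"
  using assms unfolding OU_def Uset_def by (auto simp: algebra_simps)

lemma second_stage_response:
  assumes "ud \<in> Ud" "(uc, ut, lam) \<in> OU Fc Fd h G Ec M x ud \<beta>"
    and bound: "\<forall>u\<in>Uset Fc Fd h G Ud x. second_stage B2 c2 d B1 Ec Ed x (fst u) (snd u) \<le> ereal R"
  shows "\<exists>y\<ge>0. ereal (c2 \<bullet> y) - udot ut \<le> ereal R \<and>
    (\<forall>i. ereal ((d - B1 *v x - Ed *v ud) $ i) \<le> ereal ((B2 *v y + Ec *v uc) $ i) + udot ut)"
proof (cases "ut = 0")
  case True
  then have "(uc, ud) \<in> Uset Fc Fd h G Ud x"
    using assms Uset_if_OU_no_slack by blast
  then have "second_stage B2 c2 d B1 Ec Ed x uc ud \<le> ereal R"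
    using bound by fastforce
  then obtain y where "0 \<le> y" "d - B1 *v x - Ec *v uc - Ed *v ud \<le> B2 *v y" "c2 \<bullet> y \<le> R"
    unfolding second_stage_def using lp_feasible_le_if_INF_le[OF matrix_vector_mul_linear] by blast
  then show ?thesis
    using True by (auto simp: udot_def less_eq_vec_def algebra_simps)
qed (auto simp: udot_def)

lemma recourse_neq_minf:
  assumes "x \<in> Xset A b Iint" "Uset Fc Fd h G Ud x \<noteq> {}"
    and bounded_below:
      "(INF (x, u, y) \<in> {(x, u, y). x \<in> Xset A b Iint \<and> u \<in> Uset Fc Fd h G Ud x \<and> 0 \<le> y \<and>
            d - B1 *v x - Ec *v fst u - Ed *v snd u \<le> B2 *v y}.
          ereal (c1 \<bullet> x + c2 \<bullet> y)) > -\<infinity>"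
  shows "recourse Fc Fd h G Ud B2 c2 d B1 Ec Ed x \<noteq> -\<infinity>"
proof -
  define S where "S = {(x, u, y). x \<in> Xset A b Iint \<and> u \<in> Uset Fc Fd h G Ud x \<and> 0 \<le> y \<and>
    d - B1 *v x - Ec *v fst u - Ed *v snd u \<le> B2 *v y}"
  obtain L where L: "ereal L < (INF (x, u, y) \<in> S. ereal (c1 \<bullet> x + c2 \<bullet> y))"
    using ereal_dense2[OF bounded_below[folded S_def]] by blast
  obtain u where u: "u \<in> Uset Fc Fd h G Ud x" using assms(2) by blast
  have "ereal (L - c1 \<bullet> x) \<le> second_stage B2 c2 d B1 Ec Ed x (fst u) (snd u)"
    unfolding second_stage_def
  proof (rule INF_greatest)
    fix y assume "y \<in> {y. 0 \<le> y \<and> d - B1 *v x - Ec *v fst u - Ed *v snd u \<le> B2 *v y}"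
    then have "(x, u, y) \<in> S" using assms(1) u by (simp add: S_def)
    then have "(INF (x, u, y) \<in> S. ereal (c1 \<bullet> x + c2 \<bullet> y)) \<le> ereal (c1 \<bullet> x + c2 \<bullet> y)"
      by (rule INF_lower2) simp
    then have "ereal L \<le> ereal (c1 \<bullet> x + c2 \<bullet> y)"
      using L by (meson less_imp_le order.strict_trans2)
    then show "ereal (L - c1 \<bullet> x) \<le> ereal (c2 \<bullet> y)" by simp
  qed
  also have "\<dots> \<le> recourse Fc Fd h G Ud B2 c2 d B1 Ec Ed x"
    unfolding recourse_def using u by (rule SUP_upper)
  finally show ?thesis by auto
qed

lemma relax_feas_at_recourse:
  assumes x: "x \<in> Xset A b Iint"
    and R: "recourse Fc Fd h G Ud B2 c2 d B1 Ec Ed x = ereal R"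
    and scenarios: "fst ` (So \<union> Sf) \<subseteq> Ud"
    and M_large: "\<forall>(ud, \<beta>) \<in> So \<union> Sf.
        \<exists>lam. 0 \<le> lam \<and> lam \<le> (\<chi> i. M) \<and> - (transpose Ec *v \<beta>) \<le> transpose (Fc x) *v lam"
  shows "\<exists>yo uco uto lo yf vc vt z.
    relax_feas A b Iint Fc Fd h G B2 c2 d B1 Ec Ed M So Sf x R yo uco uto lo yf vc vt z"
proof -
  have bound: "\<forall>u\<in>Uset Fc Fd h G Ud x. second_stage B2 c2 d B1 Ec Ed x (fst u) (snd u) \<le> ereal R"
  proof
    fix u assume "u \<in> Uset Fc Fd h G Ud x"
    then have "second_stage B2 c2 d B1 Ec Ed x (fst u) (snd u) \<le> recourse Fc Fd h G Ud B2 c2 d B1 Ec Ed x"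
      unfolding recourse_def by (rule SUP_upper)
    then show "second_stage B2 c2 d B1 Ec Ed x (fst u) (snd u) \<le> ereal R" using R by simp
  qed
  have "\<forall>(ud, \<beta>) \<in> So \<union> Sf. \<exists>y uc ut lam. 0 \<le> y \<and> ereal (c2 \<bullet> y) - udot ut \<le> ereal R \<and>
      (\<forall>i. ereal ((d - B1 *v x - Ed *v ud) $ i) \<le> ereal ((B2 *v y + Ec *v uc) $ i) + udot ut) \<and>
      (uc, ut, lam) \<in> OU Fc Fd h G Ec M x ud \<beta>" (is "\<forall>(ud, \<beta>) \<in> So \<union> Sf. ?response ud \<beta>")
  proof (clarify)
    fix ud \<beta> assume q: "(ud, \<beta>) \<in> So \<union> Sf"
    then obtain lam0 where "0 \<le> lam0" "lam0 \<le> (\<chi> i. M)"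
      "- (transpose Ec *v \<beta>) \<le> transpose (Fc x) *v lam0"
      using bspec[OF M_large q] by auto
    then obtain uc ut lam where ou: "(uc, ut, lam) \<in> OU Fc Fd h G Ec M x ud \<beta>"
      using OU_nonempty by blast
    moreover have "ud \<in> Ud" using q scenarios by force
    ultimately show "?response ud \<beta>"
      using second_stage_response[OF _ _ bound] by blast
  qed
  then obtain y uc ut lam where "\<forall>(ud, \<beta>) \<in> So \<union> Sf. 0 \<le> y (ud, \<beta>) \<and>
      ereal (c2 \<bullet> y (ud, \<beta>)) - udot (ut (ud, \<beta>)) \<le> ereal R \<and>
      (\<forall>i. ereal ((d - B1 *v x - Ed *v ud) $ i)
        \<le> ereal ((B2 *v y (ud, \<beta>) + Ec *v uc (ud, \<beta>)) $ i) + udot (ut (ud, \<beta>))) \<and>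
      (uc (ud, \<beta>), ut (ud, \<beta>), lam (ud, \<beta>)) \<in> OU Fc Fd h G Ec M x ud \<beta>"
    by (simp only: case_prod_beta' bchoice_iff prod.collapse) blast
  then have "relax_feas A b Iint Fc Fd h G B2 c2 d B1 Ec Ed M So Sf x R y uc ut lam y uc ut lam"
    using x unfolding relax_feas_def by blast
  then show ?thesis by blast
qed

lemma relax_value_le_w_star:
  assumes "\<forall>x\<in>Xset A b Iint. recourse Fc Fd h G Ud B2 c2 d B1 Ec Ed x < \<infinity> \<longrightarrow>
            (\<exists>\<eta> yo uco uto lo yf vc vt z.
               relax_feas A b Iint Fc Fd h G B2 c2 d B1 Ec Ed M So Sf x \<eta> yo uco uto lo yf vc vt z \<and>
               ereal (c1 \<bullet> x + \<eta>) \<le> ereal (c1 \<bullet> x) + recourse Fc Fd h G Ud B2 c2 d B1 Ec Ed x)"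
  shows "relax_value A b Iint c1 Fc Fd h G B2 c2 d B1 Ec Ed M So Sf
    \<le> w_star A b Iint c1 Fc Fd h G Ud B2 c2 d B1 Ec Ed"
  unfolding w_star_def
proof (rule INF_greatest)
  fix x assume x: "x \<in> Xset A b Iint"
  show "relax_value A b Iint c1 Fc Fd h G B2 c2 d B1 Ec Ed M So Sf
    \<le> ereal (c1 \<bullet> x) + recourse Fc Fd h G Ud B2 c2 d B1 Ec Ed x"
  proof (cases "recourse Fc Fd h G Ud B2 c2 d B1 Ec Ed x < \<infinity>")
    case True
    then obtain \<eta> yo uco uto lo yf vc vt z where
      "relax_feas A b Iint Fc Fd h G B2 c2 d B1 Ec Ed M So Sf x \<eta> yo uco uto lo yf vc vt z"
      and le: "ereal (c1 \<bullet> x + \<eta>) \<le> ereal (c1 \<bullet> x) + recourse Fc Fd h G Ud B2 c2 d B1 Ec Ed x"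
      using assms x by blast
    then have "relax_value A b Iint c1 Fc Fd h G B2 c2 d B1 Ec Ed M So Sf \<le> ereal (c1 \<bullet> x + \<eta>)"
      unfolding relax_value_def by (intro Inf_lower) blast
    then show ?thesis using le by (rule order_trans)
  qed simp
qed

theorem corollary11:
  fixes A :: "real^'x^'a" and b :: "real^'a" and Iint :: "'x set" and c1 :: "real^'x"
    and Fc :: "real^'x \<Rightarrow> real^'uc^'r" and Fd :: "real^'x \<Rightarrow> real^'ud^'r"
    and h :: "real^'r" and G :: "real^'x^'r" and Ud :: "(real^'ud) set"
    and B2 :: "real^'y^'m" and c2 :: "real^'y" and d :: "real^'m" and B1 :: "real^'x^'m"
    and Ec :: "real^'uc^'m" and Ed :: "real^'ud^'m" and M :: real
    and So :: "((real^'ud) \<times> (real^'m)) set" and Sf :: "((real^'ud) \<times> (real^'m)) set"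
  assumes Ud_finite: "finite Ud"
    and Ud_int: "Ud \<subseteq> {v. 0 \<le> v \<and> (\<forall>i. v $ i \<in> \<int>)}"
    and U_nonempty: "\<forall>x\<in>Xset A b Iint. Uset Fc Fd h G Ud x \<noteq> {}"
    and U_bounded: "\<forall>x\<in>Xset A b Iint. bounded (Uset Fc Fd h G Ud x)"
    and bounded_below:
      "(INF (x, u, y) \<in> {(x, u, y). x \<in> Xset A b Iint \<and> u \<in> Uset Fc Fd h G Ud x \<and> 0 \<le> y \<and>
            d - B1 *v x - Ec *v fst u - Ed *v snd u \<le> B2 *v y}.
          ereal (c1 \<bullet> x + c2 \<bullet> y)) > -\<infinity>"
    and M_large: "\<forall>x\<in>Xset A b Iint. \<forall>(ud, \<beta>) \<in> So \<union> Sf.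
        \<exists>lam. 0 \<le> lam \<and> lam \<le> (\<chi> i. M) \<and> - (transpose Ec *v \<beta>) \<le> transpose (Fc x) *v lam"
    and So_sub: "So \<subseteq> Ud \<times> {p. p extreme_point_of PiSet B2 c2}"
    and Sf_sub: "Sf \<subseteq> Ud \<times> extreme_rays (PiSet B2 c2)"
  shows "(\<forall>x\<in>Xset A b Iint. recourse Fc Fd h G Ud B2 c2 d B1 Ec Ed x < \<infinity> \<longrightarrow>
            (\<exists>\<eta> yo uco uto lo yf vc vt z.
               relax_feas A b Iint Fc Fd h G B2 c2 d B1 Ec Ed M So Sf x \<eta> yo uco uto lo yf vc vt z \<and>
               ereal (c1 \<bullet> x + \<eta>) \<le> ereal (c1 \<bullet> x) + recourse Fc Fd h G Ud B2 c2 d B1 Ec Ed x))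
         \<and> relax_value A b Iint c1 Fc Fd h G B2 c2 d B1 Ec Ed M So Sf
             \<le> w_star A b Iint c1 Fc Fd h G Ud B2 c2 d B1 Ec Ed"
proof -
  have "\<forall>x\<in>Xset A b Iint. recourse Fc Fd h G Ud B2 c2 d B1 Ec Ed x < \<infinity> \<longrightarrow>
      (\<exists>\<eta> yo uco uto lo yf vc vt z.
         relax_feas A b Iint Fc Fd h G B2 c2 d B1 Ec Ed M So Sf x \<eta> yo uco uto lo yf vc vt z \<and>
         ereal (c1 \<bullet> x + \<eta>) \<le> ereal (c1 \<bullet> x) + recourse Fc Fd h G Ud B2 c2 d B1 Ec Ed x)"
  proof (intro ballI impI)
    fix x assume x: "x \<in> Xset A b Iint"
      and finite: "recourse Fc Fd h G Ud B2 c2 d B1 Ec Ed x < \<infinity>"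
    obtain R where R: "recourse Fc Fd h G Ud B2 c2 d B1 Ec Ed x = ereal R"
      using finite recourse_neq_minf[OF x bspec[OF U_nonempty x] bounded_below]
      by (cases "recourse Fc Fd h G Ud B2 c2 d B1 Ec Ed x") auto
    have "fst ` (So \<union> Sf) \<subseteq> Ud"
      using So_sub Sf_sub by auto
    then have "\<exists>yo uco uto lo yf vc vt z.
        relax_feas A b Iint Fc Fd h G B2 c2 d B1 Ec Ed M So Sf x R yo uco uto lo yf vc vt z"
      using relax_feas_at_recourse[OF x R _ bspec[OF M_large x]] by blast
    moreover have "ereal (c1 \<bullet> x + R) \<le> ereal (c1 \<bullet> x) + recourse Fc Fd h G Ud B2 c2 d B1 Ec Ed x"
      using R by simp
    ultimately show "\<exists>\<eta> yo uco uto lo yf vc vt z.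
         relax_feas A b Iint Fc Fd h G B2 c2 d B1 Ec Ed M So Sf x \<eta> yo uco uto lo yf vc vt z \<and>
         ereal (c1 \<bullet> x + \<eta>) \<le> ereal (c1 \<bullet> x) + recourse Fc Fd h G Ud B2 c2 d B1 Ec Ed x"
      by blast
  qed
  then show ?thesis
    using relax_value_le_w_star by blast
qed

end
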